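(* Let $K,L,N$ be positive integers, $M=K/\gcd(K,L)$, and write $L=\prod_p p^{\lambda_p}$, $N=\prod_p p^{\nu_p}$. Let $f_1,\dots,f_n$ and $d_1,\dots,d_n$ be integers such that both $\prod_i f_i$ and $\prod_i (f_i-d_iK)$ are divisible by $N$. Suppose that for every prime $p$ dividing $M$ with $\lambda_p<\nu_p$ there exist integers $0\le\alpha_{i,p}\le\lambda_p$ ($i=1,\dots,n$) such that $p^{\alpha_{i,p}}\mid f_i$ for each $i$ and $\sum_i\alpha_{i,p}\ge\nu_p$. Then $$\frac{\prod_i f_i}{N}\equiv\frac{\prod_i(f_i-d_iK)}{N}\pmod M.$$ *)

theory Defs
  imports "HOL-Number_Theory.Number_Theory"
begin

end

theory Submission
  imports Defs
begin

(* Write M = K / gcd(K, L), A and B for the two products, and nu_p, lambda_p, mu_p for the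
   exponents of p in N, L, M. It suffices that N M divides A - B, and this is checked one
   prime at a time. If p does not divide M, then p^nu_p divides N and hence both A and B.
   Otherwise p has exponent mu_p + lambda_p in K. If lambda_p >= nu_p, then p^(nu_p + mu_p)
   divides K, and K divides A - B. If lambda_p < nu_p, then p^(alpha_i + mu_p) divides K, so
   f_i = p^alpha_i g_i and f_i - d_i K = p^alpha_i g_i' with g_i = g_i' mod p^mu_p; hence
   A - B is divisible by p^(sum alpha_i + mu_p), and sum alpha_i >= nu_p. *)

lemma prod_diff_prod_sub_mult_dvd:
  fixes a f d :: "'i \<Rightarrow> 'a::comm_ring_1"
  assumes "finite I"
    and "\<And>i. i \<in> I \<Longrightarrow> a i dvd f i"
    and "\<And>i. i \<in> I \<Longrightarrow> a i * m dvd k"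
  shows "(\<Prod>i\<in>I. a i) * m dvd (\<Prod>i\<in>I. f i) - (\<Prod>i\<in>I. f i - d i * k)"
  using assms
proof (induction I rule: finite_induct)
  case empty
  then show ?case by simp
next
  case (insert j I)
  define A where "A = (\<Prod>i\<in>I. a i)"
  define P where "P = (\<Prod>i\<in>I. f i)"
  define Q where "Q = (\<Prod>i\<in>I. f i - d i * k)"
  have IH: "A * m dvd P - Q"
    using insert.IH insert.prems unfolding A_def P_def Q_def by blast
  have "A dvd Q"
    unfolding A_def Q_def
  proof (rule prod_dvd_prod)
    fix i assume "i \<in> I"
    with insert.prems have "a i dvd f i" "a i dvd k"
      by (auto intro: dvd_mult_left)
    then show "a i dvd f i - d i * k" by simp
  qed
  have split: "P * f j - Q * (f j - d j * k) = (P - Q) * f j + Q * (d j * k)"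
    by (simp add: algebra_simps)
  have dvd_left: "A * a j * m dvd (P - Q) * f j"
    using mult_dvd_mono[OF IH insert.prems(1)[of j]] by (simp add: ac_simps)
  have "A * a j * m dvd Q * k"
    using mult_dvd_mono[OF \<open>A dvd Q\<close> insert.prems(2)[of j]] by (simp add: ac_simps)
  then have dvd_right: "A * a j * m dvd Q * (d j * k)"
    by (metis dvd_mult2 mult.assoc mult.commute)
  have "A * a j * m dvd P * f j - Q * (f j - d j * k)"
    unfolding split using dvd_left dvd_right by (rule dvd_add)
  then show ?case
    using insert.hyps unfolding A_def P_def Q_def by (simp add: ac_simps)
qed

lemma multiplicity_div_gcd:
  fixes K L p :: nat
  assumes "K > 0" "L > 0" "prime p" "p dvd K div gcd K L"
  shows "multiplicity p K = multiplicity p (K div gcd K L) + multiplicity p L"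
proof -
  have "K div gcd K L \<noteq> 0" "gcd K L \<noteq> 0"
    using assms(1) by (auto simp: div_greater_zero_iff)
  then have "multiplicity p K = multiplicity p (K div gcd K L) + multiplicity p (gcd K L)"
    using prime_elem_multiplicity_mult_distrib[of p "K div gcd K L" "gcd K L"] assms(3) by simp
  moreover have "multiplicity p (K div gcd K L) > 0"
    using assms(3,4) \<open>K div gcd K L \<noteq> 0\<close> by (simp add: prime_multiplicity_gt_zero_iff)
  ultimately show ?thesis
    using multiplicity_gcd[of K L p] assms(1-3) by (simp add: min_def split: if_splits)
qed

lemma of_nat_prime_power_multiplicity_dvd:
  "int p ^ multiplicity p n dvd int n"
  by (metis multiplicity_dvd of_nat_dvd_iff of_nat_power)

lemma of_nat_dvd_if_prime_powers_dvd:
  fixes n :: nat and x :: int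
  assumes "n > 0" and "\<And>p. prime p \<Longrightarrow> int p ^ multiplicity p n dvd x"
  shows "int n dvd x"
proof (cases "x = 0")
  case False
  show ?thesis
  proof (rule multiplicity_le_imp_dvd)
    fix q :: int assume "prime q"
    define p where "p = nat q"
    have q: "q = int p"
      using prime_ge_0_int[OF \<open>prime q\<close>] unfolding p_def by simp
    have p: "prime p"
      using \<open>prime q\<close> unfolding p_def by simp
    have "\<not> is_unit p" "\<not> is_unit q"
      using p \<open>prime q\<close> by (auto simp: not_prime_unit)
    let ?k = "multiplicity q (int n)"
    have "int (p ^ ?k) dvd int n"
      using multiplicity_dvd[of q "int n"] q by simp
    then have "p ^ ?k dvd n"
      by (simp only: of_nat_dvd_iff)
    then have "?k \<le> multiplicity p n"
      using \<open>n > 0\<close> \<open>\<not> is_unit p\<close> by (intro multiplicity_geI) auto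
    then have "q ^ ?k dvd x"
      using assms(2)[OF p] q le_imp_power_dvd dvd_trans by blast
    then show "?k \<le> multiplicity q x"
      using False \<open>\<not> is_unit q\<close> by (intro multiplicity_geI) auto
  qed (use \<open>n > 0\<close> in simp)
qed simp

lemma prime_power_dvd_prod_diff_prod_sub:
  fixes K L N n p :: nat and f d :: "nat \<Rightarrow> int"
  assumes "prime p" and "K > 0" and "L > 0"
    and "int N dvd (\<Prod>i<n. f i)"
    and "int N dvd (\<Prod>i<n. f i - d i * int K)"
    and "p dvd K div gcd K L \<Longrightarrow> multiplicity p L < multiplicity p N \<Longrightarrow>
           \<exists>\<alpha> :: nat \<Rightarrow> nat. (\<forall>i<n. \<alpha> i \<le> multiplicity p L \<and> int p ^ \<alpha> i dvd f i)
                 \<and> (\<Sum>i<n. \<alpha> i) \<ge> multiplicity p N"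
  shows "int p ^ (multiplicity p N + multiplicity p (K div gcd K L))
           dvd (\<Prod>i<n. f i) - (\<Prod>i<n. f i - d i * int K)"
proof -
  let ?M = "K div gcd K L"
  let ?A = "\<Prod>i<n. f i" and ?B = "\<Prod>i<n. f i - d i * int K"
  show ?thesis
  proof (cases "p dvd ?M")
    case False
    then have "multiplicity p ?M = 0"
      by (rule not_dvd_imp_multiplicity_0)
    moreover have "int p ^ multiplicity p N dvd int N"
      by (rule of_nat_prime_power_multiplicity_dvd)
    ultimately show ?thesis
      using assms(4,5) by (simp add: dvd_trans)
  next
    case True
    then have mult_K: "multiplicity p K = multiplicity p ?M + multiplicity p L"
      using multiplicity_div_gcd assms(1-3) by blast
    show ?thesis
    proof (cases "multiplicity p L < multiplicity p N")
      case False
      then have "int p ^ (multiplicity p N + multiplicity p ?M) dvd int p ^ multiplicity p K"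
        using mult_K by (simp add: le_imp_power_dvd)
      also have "\<dots> dvd int K"
        by (rule of_nat_prime_power_multiplicity_dvd)
      also have "int K dvd ?A - ?B"
        using prod_diff_prod_sub_mult_dvd[of "{..<n}" "\<lambda>_. 1" f "int K" "int K" d] by simp
      finally show ?thesis .
    next
      case True
      then obtain \<alpha> :: "nat \<Rightarrow> nat"
        where \<alpha>: "\<And>i. i < n \<Longrightarrow> \<alpha> i \<le> multiplicity p L \<and> int p ^ \<alpha> i dvd f i"
          and sum_\<alpha>: "(\<Sum>i<n. \<alpha> i) \<ge> multiplicity p N"
        using assms(6) \<open>p dvd ?M\<close> by blast
      have \<alpha>_dvd_K: "int p ^ \<alpha> i * int p ^ multiplicity p ?M dvd int K" if "i < n" for i
      proof -
        have "int p ^ (\<alpha> i + multiplicity p ?M) dvd int p ^ multiplicity p K"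
          using \<alpha>[OF that] mult_K by (intro le_imp_power_dvd) simp
        also have "\<dots> dvd int K"
          by (rule of_nat_prime_power_multiplicity_dvd)
        finally show ?thesis
          by (simp add: power_add)
      qed
      have "int p ^ (multiplicity p N + multiplicity p ?M)
              dvd int p ^ ((\<Sum>i<n. \<alpha> i) + multiplicity p ?M)"
        using sum_\<alpha> by (simp add: le_imp_power_dvd)
      also have "\<dots> = (\<Prod>i<n. int p ^ \<alpha> i) * int p ^ multiplicity p ?M"
        by (simp add: power_sum power_add)
      also have "\<dots> dvd ?A - ?B"
        by (rule prod_diff_prod_sub_mult_dvd) (simp_all add: \<alpha> \<alpha>_dvd_K)
      finally show ?thesis .
    qed
  qed
qed

theorem fact1:
  fixes K L N n :: nat and f d :: "nat \<Rightarrow> int"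
  assumes "K > 0" and "L > 0" and "N > 0"
    and "int N dvd (\<Prod>i<n. f i)"
    and "int N dvd (\<Prod>i<n. f i - d i * int K)"
    and "\<forall>p. prime p \<and> p dvd (K div gcd K L) \<and> multiplicity p L < multiplicity p N \<longrightarrow>
           (\<exists>\<alpha> :: nat \<Rightarrow> nat. (\<forall>i<n. \<alpha> i \<le> multiplicity p L \<and> int p ^ \<alpha> i dvd f i)
                 \<and> (\<Sum>i<n. \<alpha> i) \<ge> multiplicity p N)"
  shows "[(\<Prod>i<n. f i) div int N = (\<Prod>i<n. f i - d i * int K) div int N] (mod int (K div gcd K L))"
proof -
  define M where "M = K div gcd K L"
  define A where "A = (\<Prod>i<n. f i)"
  define B where "B = (\<Prod>i<n. f i - d i * int K)"
  have "M > 0"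
    using assms(1) unfolding M_def by (simp add: div_greater_zero_iff)
  have "int p ^ multiplicity p (N * M) dvd A - B" if "prime p" for p
  proof -
    have "multiplicity p (N * M) = multiplicity p N + multiplicity p M"
      using that assms(3) \<open>M > 0\<close> by (simp add: prime_elem_multiplicity_mult_distrib)
    moreover have "int p ^ (multiplicity p N + multiplicity p M) dvd A - B"
      unfolding M_def A_def B_def
      by (rule prime_power_dvd_prod_diff_prod_sub[OF that assms(1,2,4,5)]) (use assms(6) that in blast)
    ultimately show ?thesis
      by simp
  qed
  then have "int (N * M) dvd A - B"
    using assms(3) \<open>M > 0\<close> by (intro of_nat_dvd_if_prime_powers_dvd) simp_all
  also have "A - B = int N * (A div int N - B div int N)"
    using assms(4,5) unfolding A_def B_def by (simp add: right_diff_distrib)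
  finally have "int M dvd A div int N - B div int N"
    using assms(3) by simp
  then show ?thesis
    unfolding M_def A_def B_def by (simp add: cong_iff_dvd_diff)
qed

end
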